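(* There exist constants $c,C>0$ and infinitely many $n\in\mathbb{N}$ such that for each of them there is a connected graph $G$ on $n$ vertices of maximum degree $3$, vertices $a,b\in V(G)$, and a set $\mathcal{X}\subseteq V(G)$ with $|\mathcal{X}|\le C\sqrt{n}$ such that, in the geodesic-biased random walk on $G$ with target $b$ and excited set $\mathcal{X}$, started at $a$ (for any choice of the fixed shortest paths), \[\mathbb{E}[\tau_a(b,\mathcal{X})]\ \ge\ c\,\exp\left(\frac{\sqrt[4]{n}}{100}\right).\]
   Context: Geodesic-biased random walk: let $G$ be a finite connected graph, $b\in V(G)$ a target vertex and $\mathcal{X}\subseteq V(G)$ a set of excited vertices. For every vertex $x\neq b$ fix in advance one shortest path (geodesic) in $G$ from $x$ to $b$. A walker moves in discrete time: from an unexcited vertex ($x\notin\mathcal{X}$) she moves to a uniformly random neighbour of $x$; from an excited vertex ($x\in\mathcal{X}$) she moves deterministically to the next vertex on the fixed shortest path from $x$ to $b$. $\tau_a(b,\mathcal{X})$ denotes the first time the walker started at $a$ visits $b$. *)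

theory Defs
  imports "HOL-Analysis.Analysis"
begin

definition simple_graph :: "nat \<Rightarrow> (nat \<Rightarrow> nat \<Rightarrow> bool) \<Rightarrow> bool" where
  "simple_graph n E \<longleftrightarrow> (\<forall>x y. E x y \<longrightarrow> x < n \<and> y < n \<and> x \<noteq> y \<and> E y x)"

definition deg :: "nat \<Rightarrow> (nat \<Rightarrow> nat \<Rightarrow> bool) \<Rightarrow> nat \<Rightarrow> nat" where
  "deg n E x = card {y \<in> {..<n}. E x y}"

definition is_walk :: "(nat \<Rightarrow> nat \<Rightarrow> bool) \<Rightarrow> nat list \<Rightarrow> bool" where
  "is_walk E p \<longleftrightarrow> p \<noteq> [] \<and> (\<forall>i. Suc i < length p \<longrightarrow> E (p ! i) (p ! Suc i))"

definition connected_graph :: "nat \<Rightarrow> (nat \<Rightarrow> nat \<Rightarrow> bool) \<Rightarrow> bool" where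
  "connected_graph n E \<longleftrightarrow> 0 < n \<and>
     (\<forall>x<n. \<forall>y<n. \<exists>p. is_walk E p \<and> hd p = x \<and> last p = y)"

definition gdist :: "(nat \<Rightarrow> nat \<Rightarrow> bool) \<Rightarrow> nat \<Rightarrow> nat \<Rightarrow> nat" where
  "gdist E x y = (LEAST k. \<exists>p. is_walk E p \<and> hd p = x \<and> last p = y \<and> length p = Suc k)"

definition is_geodesic :: "(nat \<Rightarrow> nat \<Rightarrow> bool) \<Rightarrow> nat \<Rightarrow> nat \<Rightarrow> nat list \<Rightarrow> bool" where
  "is_geodesic E x b p \<longleftrightarrow> is_walk E p \<and> hd p = x \<and> last p = b \<and> length p = Suc (gdist E x b)"

definition gb_trans :: "nat \<Rightarrow> (nat \<Rightarrow> nat \<Rightarrow> bool) \<Rightarrow> nat set \<Rightarrow> (nat \<Rightarrow> nat list)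
    \<Rightarrow> nat \<Rightarrow> nat \<Rightarrow> real" where
  "gb_trans n E X geo x y =
     (if x \<in> X then (if y = geo x ! 1 then 1 else 0)
      else (if E x y then 1 / real (deg n E x) else 0))"

text \<open>surv t y = probability that the walk started at a is at y at time t and has not
visited b at any time 0..t.\<close>
fun gb_surv :: "nat \<Rightarrow> (nat \<Rightarrow> nat \<Rightarrow> bool) \<Rightarrow> nat set \<Rightarrow> (nat \<Rightarrow> nat list)
    \<Rightarrow> nat \<Rightarrow> nat \<Rightarrow> nat \<Rightarrow> nat \<Rightarrow> real" where
  "gb_surv n E X geo a b 0 y = (if y = a \<and> y \<noteq> b then 1 else 0)"
| "gb_surv n E X geo a b (Suc t) y =
     (if y = b then 0 else
        (\<Sum>x\<in>{..<n} - {b}. gb_surv n E X geo a b t x * gb_trans n E X geo x y))"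

text \<open>P(tau_a(b,X) > t).\<close>
definition gb_tail :: "nat \<Rightarrow> (nat \<Rightarrow> nat \<Rightarrow> bool) \<Rightarrow> nat set \<Rightarrow> (nat \<Rightarrow> nat list)
    \<Rightarrow> nat \<Rightarrow> nat \<Rightarrow> nat \<Rightarrow> real" where
  "gb_tail n E X geo a b t = (\<Sum>y\<in>{..<n} - {b}. gb_surv n E X geo a b t y)"

text \<open>E[tau_a(b,X)] = sum over t of P(tau > t), as an extended nonnegative real.\<close>
definition gb_expected_hitting :: "nat \<Rightarrow> (nat \<Rightarrow> nat \<Rightarrow> bool) \<Rightarrow> nat set \<Rightarrow> (nat \<Rightarrow> nat list)
    \<Rightarrow> nat \<Rightarrow> nat \<Rightarrow> ennreal" where
  "gb_expected_hitting n E X geo a b = (\<Sum>t. ennreal (gb_tail n E X geo a b t))"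

end

theory Submission
  imports Defs
begin

text \<open>
The graph is a path 0, 1, ..., M with target b = 0 and start a = W, together with a ladder hanging
from the vertices 1, ..., W of the path: over each x there is a path of three further vertices, and
an excited vertex joins the top of the ladder over x to the bottom of the ladder over x + 1.  A
geodesic from that excited vertex to 0 runs down the ladder over x + 1, so the excited vertices
push the walker away from the target.  The potential (16 - layer) * (5/4)^(W - x) is harmonic on
the ladder and increases by at most 1 in expectation along the path, so h(X_t) - t is a
supermartingale up to the hitting time, and optional stopping gives
E[tau] >= h(0)/2 - h(W) = 8 * (5/4)^W - 16.  With M = W^2 - 4W there are n = W^2 vertices and
W - 1 excited ones, and (5/4)^W dominates exp(n^(1/4) / 100).
\<close>

section \<open>Walks and geodesics\<close>

lemma is_walk_Cons: "is_walk E p \<Longrightarrow> E x (hd p) \<Longrightarrow> is_walk E (x # p)"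
  unfolding is_walk_def
  by (auto simp: nth_Cons split: nat.splits) (metis hd_conv_nth)

lemma is_walk_tl: "is_walk E p \<Longrightarrow> 1 < length p \<Longrightarrow> is_walk E (tl p)"
  unfolding is_walk_def by (cases p) auto

lemma is_walk_second:
  assumes "is_walk E p" "hd p \<noteq> last p"
  shows "1 < length p" "E (hd p) (p ! 1)"
proof -
  show l: "1 < length p"
    using assms by (cases p) (auto simp: is_walk_def)
  then show "E (hd p) (p ! 1)"
    using assms(1) by (cases p) (auto simp: is_walk_def)
qed

lemma rtranclp_imp_walk: "E\<^sup>*\<^sup>* x y \<Longrightarrow> \<exists>p. is_walk E p \<and> hd p = x \<and> last p = y"
proof (induction rule: converse_rtranclp_induct)
  case base
  show ?case by (intro exI[of _ "[y]"]) (simp add: is_walk_def)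
next
  case (step u v)
  then obtain p where p: "is_walk E p" "hd p = v" "last p = y" by blast
  then have "p \<noteq> []" by (simp add: is_walk_def)
  then show ?case
    using p step(1) is_walk_Cons[of E p u] by (intro exI[of _ "u # p"]) auto
qed

lemma simple_graph_edge_bound: "simple_graph n E \<Longrightarrow> E x y \<Longrightarrow> x < n \<and> y < n"
  by (auto simp: simple_graph_def)

lemma connected_graph_deg_pos:
  assumes "simple_graph n E" "connected_graph n E" "x < n" "y < n" "x \<noteq> y"
  shows "deg n E x > 0"
proof -
  obtain p where p: "is_walk E p" "hd p = x" "last p = y"
    using assms(2-4) unfolding connected_graph_def by blast
  then have "E x (p ! 1)" using is_walk_second[OF p(1)] assms(5) by simp
  then have "p ! 1 \<in> {z\<in>{..<n}. E x z}" using simple_graph_edge_bound[OF assms(1)] by auto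
  then show ?thesis unfolding deg_def by (auto simp: card_gt_0_iff)
qed

lemma reaches_by_descent:
  fixes phi :: "nat \<Rightarrow> nat"
  assumes "\<And>v. v < n \<Longrightarrow> v \<noteq> b \<Longrightarrow> \<exists>w<n. E v w \<and> phi w < phi v"
  shows "v < n \<Longrightarrow> E\<^sup>*\<^sup>* v b"
proof (induction "phi v" arbitrary: v rule: less_induct)
  case less
  show ?case
  proof (cases "v = b")
    case False
    then obtain w where "w < n" "E v w" "phi w < phi v" using assms less.prems by blast
    then show ?thesis using less.hyps converse_rtranclp_into_rtranclp by metis
  qed simp
qed

lemma connected_graphI:
  assumes "simple_graph n E" "b < n" "\<And>v. v < n \<Longrightarrow> E\<^sup>*\<^sup>* v b"
  shows "connected_graph n E"
proof -
  have sym: "conversep E = E"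
    using assms(1) by (auto simp: simple_graph_def fun_eq_iff)
  have "E\<^sup>*\<^sup>* x y" if "x < n" "y < n" for x y
    using assms(3)[OF that(1)] rtranclp_converseI[OF assms(3)[OF that(2)]]
    unfolding sym by (rule rtranclp_trans)
  then show ?thesis
    unfolding connected_graph_def using assms(2) rtranclp_imp_walk by fastforce
qed

lemma walk_potential_bound:
  fixes phi :: "nat \<Rightarrow> nat"
  assumes "is_walk E p" and lip: "\<And>u v. E u v \<Longrightarrow> phi u \<le> phi v + 1"
  shows "phi (hd p) \<le> phi (last p) + (length p - 1)"
  using assms(1)
proof (induction p)
  case (Cons x q)
  show ?case
  proof (cases q)
    case (Cons y r)
    then have "is_walk E q" "E x y"
      using Cons.prems is_walk_tl[of E "x # q"] by (auto simp: is_walk_def)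
    then show ?thesis using Cons.IH lip[of x y] \<open>q = y # r\<close> by simp
  qed simp
qed (simp add: is_walk_def)

lemma gdist_le_walk_length:
  "is_walk E p \<Longrightarrow> gdist E (hd p) (last p) \<le> length p - 1"
  unfolding gdist_def by (rule Least_le, rule exI[of _ p]) (cases p, auto simp: is_walk_def)

lemma geodesic_second_vertex:
  fixes phi :: "nat \<Rightarrow> nat"
  assumes "is_geodesic E x b p" "x \<noteq> b" and lip: "\<And>u v. E u v \<Longrightarrow> phi u \<le> phi v + 1"
  shows "E x (p ! 1)" "phi (p ! 1) < phi b + gdist E x b"
proof -
  have p: "is_walk E p" "hd p = x" "last p = b" "length p = Suc (gdist E x b)"
    using assms(1) unfolding is_geodesic_def by auto
  then have l: "1 < length p" using is_walk_second assms(2) by blast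
  then show "E x (p ! 1)" using is_walk_second p assms(2) by blast
  have "hd (tl p) = p ! 1" "last (tl p) = b" using l p(3) by (cases p; simp add: hd_conv_nth)+
  then show "phi (p ! 1) < phi b + gdist E x b"
    using walk_potential_bound[where phi=phi, OF is_walk_tl[OF p(1) l] lip] l p(4) by simp
qed

section \<open>One step of the geodesic-biased walk\<close>

lemma gb_trans_nonneg: "gb_trans n E X geo x y \<ge> 0"
  unfolding gb_trans_def by auto

lemma gb_surv_nonneg: "gb_surv n E X geo a b t y \<ge> 0"
  by (induction t arbitrary: y) (auto intro!: sum_nonneg mult_nonneg_nonneg simp: gb_trans_nonneg)

lemma gb_tail_nonneg: "gb_tail n E X geo a b t \<ge> 0"
  unfolding gb_tail_def by (auto intro!: sum_nonneg gb_surv_nonneg)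

abbreviation gb_mean :: "nat \<Rightarrow> (nat \<Rightarrow> nat \<Rightarrow> bool) \<Rightarrow> nat set \<Rightarrow> (nat \<Rightarrow> nat list)
    \<Rightarrow> (nat \<Rightarrow> real) \<Rightarrow> nat \<Rightarrow> real" where
  "gb_mean n E X geo f x \<equiv> \<Sum>y<n. gb_trans n E X geo x y * f y"

lemma gb_mean_excited:
  assumes "x \<in> X" "geo x ! 1 < n"
  shows "gb_mean n E X geo f x = f (geo x ! 1)"
proof -
  have "(\<Sum>y<n. gb_trans n E X geo x y * f y) = (\<Sum>y<n. if y = geo x ! 1 then f y else 0)"
    using assms(1) by (intro sum.cong) (auto simp: gb_trans_def)
  also have "\<dots> = f (geo x ! 1)" using assms(2) by (simp add: sum.delta)
  finally show ?thesis .
qed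

lemma gb_mean_unexcited:
  assumes "x \<notin> X"
  shows "gb_mean n E X geo f x = (\<Sum>y\<in>{y\<in>{..<n}. E x y}. f y) / real (deg n E x)"
proof -
  have "(\<Sum>y<n. gb_trans n E X geo x y * f y) = (\<Sum>y<n. if E x y then f y / real (deg n E x) else 0)"
    using assms by (intro sum.cong) (auto simp: gb_trans_def)
  also have "\<dots> = (\<Sum>y\<in>{y\<in>{..<n}. E x y}. f y / real (deg n E x))"
    by (rule sum.inter_filter[symmetric]) simp
  also have "\<dots> = (\<Sum>y\<in>{y\<in>{..<n}. E x y}. f y) / real (deg n E x)"
    by (simp add: sum_divide_distrib)
  finally show ?thesis .
qed

lemma gb_mean_neighbours:
  assumes "x \<notin> X" "{y\<in>{..<n}. E x y} = S"
  shows "gb_mean n E X geo f x = (\<Sum>y\<in>S. f y) / real (card S)"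
  using gb_mean_unexcited[OF assms(1)] assms(2) by (simp add: deg_def)

lemma gb_trans_row_sum:
  assumes "simple_graph n E" "connected_graph n E" "x < n" "b < n" "x \<noteq> b"
    and "is_geodesic E x b (geo x)"
  shows "(\<Sum>y<n. gb_trans n E X geo x y) = 1"
proof (cases "x \<in> X")
  case True
  have "E x (geo x ! 1)"
    using assms(5,6) is_walk_second[of E "geo x"] by (auto simp: is_geodesic_def)
  then have "geo x ! 1 < n" using simple_graph_edge_bound[OF assms(1)] by blast
  then show ?thesis using gb_mean_excited[OF True, of geo n E "\<lambda>_. 1"] by simp
next
  case False
  have "deg n E x > 0" using connected_graph_deg_pos assms(1-5) by blast
  then show ?thesis
    using gb_mean_unexcited[OF False, of n E geo "\<lambda>_. 1"] by (auto simp: deg_def card_gt_0_iff)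
qed

section \<open>Hitting times under a drift condition\<close>

context
  fixes n a b :: nat and E X geo and h :: "nat \<Rightarrow> real"
  assumes b: "b < n"
    and row_sum: "\<And>x. x < n \<Longrightarrow> x \<noteq> b \<Longrightarrow> (\<Sum>y<n. gb_trans n E X geo x y) = 1"
    and drift: "\<And>x. x < n \<Longrightarrow> x \<noteq> b \<Longrightarrow> gb_mean n E X geo h x \<le> h x + 1"
begin

private abbreviation "V \<equiv> {..<n} - {b}"
private abbreviation "prob \<equiv> gb_trans n E X geo"
private abbreviation "surv \<equiv> gb_surv n E X geo a b"
private abbreviation "tail \<equiv> gb_tail n E X geo a b"

text \<open>With tau the hitting time of b: surv_potential t is E[h(X_t); tau > t] and absorption t
  is P(tau = t + 1).\<close>

private definition "surv_potential t = (\<Sum>y\<in>V. surv t y * h y)"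

private definition "absorption t = (\<Sum>x\<in>V. surv t x * prob x b)"

private lemma sum_surv_Suc:
  "(\<Sum>y\<in>V. surv (Suc t) y * f y) = (\<Sum>x\<in>V. surv t x * (\<Sum>y\<in>V. prob x y * f y))"
proof -
  have "(\<Sum>y\<in>V. surv (Suc t) y * f y) = (\<Sum>y\<in>V. \<Sum>x\<in>V. surv t x * (prob x y * f y))"
    by (simp add: sum_distrib_right mult.assoc)
  also have "\<dots> = (\<Sum>x\<in>V. surv t x * (\<Sum>y\<in>V. prob x y * f y))"
    by (subst sum.swap) (simp add: sum_distrib_left)
  finally show ?thesis .
qed

private lemma sum_minus_target:
  fixes f :: "nat \<Rightarrow> real"
  shows "(\<Sum>y\<in>V. f y) = (\<Sum>y<n. f y) - f b"
  using sum.remove[of "{..<n}" b f] b by simp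

private lemma tail_Suc: "tail (Suc t) = tail t - absorption t"
proof -
  have "tail (Suc t) = (\<Sum>x\<in>V. surv t x * (\<Sum>y\<in>V. prob x y * 1))"
    unfolding gb_tail_def using sum_surv_Suc[of t "\<lambda>_. 1"] by simp
  also have "\<dots> = (\<Sum>x\<in>V. surv t x - surv t x * prob x b)"
    using row_sum by (intro sum.cong) (auto simp: sum_minus_target algebra_simps)
  finally show ?thesis unfolding gb_tail_def absorption_def by (simp add: sum_subtractf)
qed

private lemma surv_potential_Suc:
  "surv_potential (Suc t) \<le> surv_potential t + tail t - h b * absorption t"
proof -
  have step: "surv t x * (\<Sum>y\<in>V. prob x y * h y) \<le> surv t x * (h x + 1 - prob x b * h b)"
    if "x \<in> V" for x
  proof (rule mult_left_mono)
    show "(\<Sum>y\<in>V. prob x y * h y) \<le> h x + 1 - prob x b * h b"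
      using drift[of x] that by (simp add: sum_minus_target)
  qed (rule gb_surv_nonneg)
  have "surv_potential (Suc t) = (\<Sum>x\<in>V. surv t x * (\<Sum>y\<in>V. prob x y * h y))"
    unfolding surv_potential_def by (rule sum_surv_Suc)
  also have "\<dots> \<le> (\<Sum>x\<in>V. surv t x * (h x + 1 - prob x b * h b))"
    by (rule sum_mono) (rule step)
  also have "\<dots> = (\<Sum>x\<in>V. surv t x * h x + surv t x - h b * (surv t x * prob x b))"
    by (simp add: algebra_simps)
  also have "\<dots> = surv_potential t + tail t - h b * absorption t"
    unfolding surv_potential_def gb_tail_def absorption_def
    by (simp add: sum.distrib sum_subtractf sum_distrib_left)
  finally show ?thesis .
qed

private lemma surv_potential_tail_bound:
  "surv_potential t + h b * (1 - tail t) \<le> h a + (\<Sum>s<t. tail s)" if "a \<in> V"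
proof (induction t)
  case 0
  have "surv_potential 0 = (\<Sum>y\<in>V. if y = a then h a else 0)"
    unfolding surv_potential_def by (rule sum.cong) auto
  then have "surv_potential 0 = h a" using that by simp
  moreover have "tail 0 = 1" using that by (simp add: gb_tail_def)
  ultimately show ?case by simp
next
  case (Suc t)
  have "h b * tail (Suc t) = h b * tail t - h b * absorption t"
    by (simp add: tail_Suc right_diff_distrib)
  then show ?case using Suc surv_potential_Suc[of t] by (simp add: algebra_simps)
qed

lemma gb_expected_hitting_ge_drift:
  assumes "a < n" "a \<noteq> b" and h_nonneg: "\<And>y. y < n \<Longrightarrow> h y \<ge> 0"
  shows "ennreal (h b / 2 - h a) \<le> gb_expected_hitting n E X geo a b"
proof -
  txt \<open>Either P(tau > T) \<le> 1/2 for some T, and the bound at time T applies, or the partial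
    sums of the tail grow at least linearly.\<close>
  have "\<exists>T. h b / 2 - h a \<le> (\<Sum>t<T. tail t)"
  proof (cases "\<exists>T. tail T \<le> 1/2")
    case True
    then obtain T where T: "tail T \<le> 1/2" by blast
    have "surv_potential T \<ge> 0"
      unfolding surv_potential_def using h_nonneg
      by (auto intro!: sum_nonneg mult_nonneg_nonneg gb_surv_nonneg)
    moreover have "h b / 2 \<le> h b * (1 - tail T)"
      using T h_nonneg[OF b] mult_left_mono[of "1/2" "1 - tail T" "h b"] by simp
    ultimately show ?thesis
      using surv_potential_tail_bound[of T] assms(1,2) by (intro exI[of _ T]) auto
  next
    case False
    define T where "T = nat \<lceil>h b\<rceil>"
    have "real T / 2 \<le> (\<Sum>t<T. tail t)"
      using False sum_mono[of "{..<T}" "\<lambda>_. 1/2" tail] by (simp add: not_le less_imp_le)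
    moreover have "h b \<le> real T" unfolding T_def by linarith
    moreover have "h a \<ge> 0" using h_nonneg assms(1) by simp
    ultimately show ?thesis by (intro exI[of _ T]) linarith
  qed
  then obtain T where T: "h b / 2 - h a \<le> (\<Sum>t<T. tail t)" ..
  have "ennreal (h b / 2 - h a) \<le> (\<Sum>t<T. ennreal (tail t))"
    using T by (simp add: sum_ennreal gb_tail_nonneg ennreal_leI)
  also have "\<dots> \<le> gb_expected_hitting n E X geo a b"
    unfolding gb_expected_hitting_def by (rule sum_le_suminf) auto
  finally show ?thesis .
qed

end

section \<open>A trap graph\<close>

text \<open>Vertices 0..M form the path; for 1 \<le> x \<le> W the ladder over x is M + x, M + W + x,
  M + 2W + x, and for x < W the excited vertex M + 3W + x joins M + 2W + x to M + (x + 1).\<close>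

definition trap_arc :: "nat \<Rightarrow> nat \<Rightarrow> nat \<Rightarrow> nat \<Rightarrow> bool" where
  "trap_arc W M u v \<longleftrightarrow> (v = Suc u \<and> v \<le> M) \<or> (1 \<le> u \<and> u \<le> W \<and> v = M + u)
     \<or> (M < u \<and> u < M + 3*W \<and> v = u + W)
     \<or> (M + 3*W < u \<and> u < M + 4*W \<and> v + 3*W = u + 1)"

definition trap_graph :: "nat \<Rightarrow> nat \<Rightarrow> nat \<Rightarrow> nat \<Rightarrow> bool" where
  "trap_graph W M u v \<longleftrightarrow> trap_arc W M u v \<or> trap_arc W M v u"

definition trap_excited :: "nat \<Rightarrow> nat \<Rightarrow> nat set" where
  "trap_excited W M = {M + 3*W<..<M + 4*W}"

text \<open>A 1-Lipschitz function vanishing at 0, hence a lower bound for the distance to 0.\<close>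

definition trap_level :: "nat \<Rightarrow> nat \<Rightarrow> nat \<Rightarrow> nat" where
  "trap_level W M v = (if v \<le> M then v
     else if v \<le> M + W then v - M + 1
     else if v \<le> M + 2*W then v - M - W + 2
     else if v \<le> M + 3*W then v - M - 2*W + 3
     else v - M - 3*W + 3)"

text \<open>Harmonic on the ladder; on the path its neighbour mean exceeds it by at most 1.\<close>

definition trap_potential :: "nat \<Rightarrow> nat \<Rightarrow> nat \<Rightarrow> real" where
  "trap_potential W M v = (if v \<le> M then 16 * (5/4)^(W - v)
     else if v \<le> M + W then 15 * (5/4)^(W - (v - M))
     else if v \<le> M + 2*W then 14 * (5/4)^(W - (v - M - W))
     else if v \<le> M + 3*W then 13 * (5/4)^(W - (v - M - 2*W))
     else 12 * (5/4)^(W - (v - M - 3*W)))"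

context
  fixes W M :: nat
  assumes W2: "2 \<le> W" and WM: "W < M"
begin

lemma trap_vertex_cases:
  assumes "u < M + 4*W"
  obtains (spine_low) "1 \<le> u" "u \<le> W" | (spine_high) "W < u" "u \<le> M" | (root) "u = 0"
    | (layer1) x where "1 \<le> x" "x \<le> W" "u = M + x"
    | (layer2) x where "1 \<le> x" "x \<le> W" "u = M + W + x"
    | (layer3) x where "1 \<le> x" "x \<le> W" "u = M + 2*W + x"
    | (excited) x where "1 \<le> x" "x < W" "u = M + 3*W + x"
proof -
  consider "u \<le> M" | "M < u" "u \<le> M + W" | "M + W < u" "u \<le> M + 2*W"
    | "M + 2*W < u" "u \<le> M + 3*W" | "M + 3*W < u" by linarith
  then show ?thesis
  proof cases
    case 1 then show ?thesis using spine_low spine_high root by linarith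
  next
    case 2 then show ?thesis using layer1[of "u - M"] by simp
  next
    case 3 then show ?thesis using layer2[of "u - M - W"] by simp
  next
    case 4 then show ?thesis using layer3[of "u - M - 2*W"] by simp
  next
    case 5 then show ?thesis using excited[of "u - M - 3*W"] assms by simp
  qed
qed

lemma trap_simple: "simple_graph (M + 4*W) (trap_graph W M)"
  using W2 WM unfolding simple_graph_def trap_graph_def trap_arc_def by auto

lemma trap_neighbours_spine_low:
  "1 \<le> u \<Longrightarrow> u \<le> W \<Longrightarrow> {y\<in>{..<M + 4*W}. trap_graph W M u y} = {u - 1, u + 1, M + u}"
  using W2 WM unfolding trap_graph_def trap_arc_def by auto

lemma trap_neighbours_spine_high:
  "W < u \<Longrightarrow> u < M \<Longrightarrow> {y\<in>{..<M + 4*W}. trap_graph W M u y} = {u - 1, u + 1}"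
  using W2 WM unfolding trap_graph_def trap_arc_def by auto

lemma trap_neighbours_spine_top: "{y\<in>{..<M + 4*W}. trap_graph W M M y} = {M - 1}"
  using W2 WM unfolding trap_graph_def trap_arc_def by auto

lemma trap_neighbours_root: "{y\<in>{..<M + 4*W}. trap_graph W M 0 y} = {1}"
  using W2 WM unfolding trap_graph_def trap_arc_def by auto

lemma trap_neighbours_layer1_first:
  "{y\<in>{..<M + 4*W}. trap_graph W M (M + 1) y} = {1, M + W + 1}"
  using W2 WM unfolding trap_graph_def trap_arc_def by auto

lemma trap_neighbours_layer1:
  "2 \<le> x \<Longrightarrow> x \<le> W \<Longrightarrow>
    {y\<in>{..<M + 4*W}. trap_graph W M (M + x) y} = {x, M + W + x, M + 3*W + (x - 1)}"
  using W2 WM unfolding trap_graph_def trap_arc_def by auto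

lemma trap_neighbours_layer2:
  "1 \<le> x \<Longrightarrow> x \<le> W \<Longrightarrow> {y\<in>{..<M + 4*W}. trap_graph W M (M + W + x) y} = {M + x, M + 2*W + x}"
  using W2 WM unfolding trap_graph_def trap_arc_def by auto

lemma trap_neighbours_layer3:
  "1 \<le> x \<Longrightarrow> x < W \<Longrightarrow>
    {y\<in>{..<M + 4*W}. trap_graph W M (M + 2*W + x) y} = {M + W + x, M + 3*W + x}"
  using W2 WM unfolding trap_graph_def trap_arc_def by auto

lemma trap_neighbours_layer3_last: "{y\<in>{..<M + 4*W}. trap_graph W M (M + 3*W) y} = {M + 2*W}"
  using W2 WM unfolding trap_graph_def trap_arc_def by auto

lemma trap_neighbours_excited:
  "1 \<le> x \<Longrightarrow> x < W \<Longrightarrow>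
    {y\<in>{..<M + 4*W}. trap_graph W M (M + 3*W + x) y} = {M + 2*W + x, M + x + 1}"
  using W2 WM unfolding trap_graph_def trap_arc_def by auto

lemma trap_spine_walk:
  "k \<le> M \<Longrightarrow> \<exists>p. is_walk (trap_graph W M) p \<and> hd p = k \<and> last p = 0 \<and> length p = Suc k"
proof (induction k)
  case 0 then show ?case by (intro exI[of _ "[0]"]) (simp add: is_walk_def)
next
  case (Suc k)
  then obtain p where p: "is_walk (trap_graph W M) p" "hd p = k" "last p = 0" "length p = Suc k"
    by auto
  then have "is_walk (trap_graph W M) (Suc k # p)"
    using Suc.prems by (intro is_walk_Cons) (auto simp: trap_graph_def trap_arc_def)
  then show ?case using p by (intro exI[of _ "Suc k # p"]) auto
qed

lemma trap_level_lipschitz: "trap_graph W M u v \<Longrightarrow> trap_level W M u \<le> trap_level W M v + 1"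
  using WM unfolding trap_graph_def trap_arc_def trap_level_def by auto

lemma trap_level_descent:
  assumes "v < M + 4*W" "v \<noteq> 0"
  shows "\<exists>w<M + 4*W. trap_graph W M v w \<and> trap_level W M w < trap_level W M v"
  using assms(1)
proof (cases rule: trap_vertex_cases)
  case spine_low then show ?thesis
    using WM by (intro exI[of _ "v - 1"]) (auto simp: trap_graph_def trap_arc_def trap_level_def)
next
  case spine_high then show ?thesis
    using WM by (intro exI[of _ "v - 1"]) (auto simp: trap_graph_def trap_arc_def trap_level_def)
next
  case (layer1 x) then show ?thesis
    using WM by (intro exI[of _ x]) (auto simp: trap_graph_def trap_arc_def trap_level_def)
next
  case (layer2 x) then show ?thesis
    by (intro exI[of _ "M + x"]) (auto simp: trap_graph_def trap_arc_def trap_level_def)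
next
  case (layer3 x) then show ?thesis
    by (intro exI[of _ "M + W + x"]) (auto simp: trap_graph_def trap_arc_def trap_level_def)
next
  case (excited x) then show ?thesis
    by (intro exI[of _ "M + x + 1"]) (auto simp: trap_graph_def trap_arc_def trap_level_def)
qed (use assms in simp)

lemma trap_connected: "connected_graph (M + 4*W) (trap_graph W M)"
  using trap_simple WM by (intro connected_graphI[of _ _ 0])
    (auto intro: reaches_by_descent[where phi = "trap_level W M"] trap_level_descent)

lemma trap_deg_le_3:
  assumes "u < M + 4*W"
  shows "deg (M + 4*W) (trap_graph W M) u \<le> 3"
proof -
  have card3: "card {a, b, c :: nat} \<le> 3" for a b c by (auto simp: card_insert_if)
  have card2: "card {a, b :: nat} \<le> 3" for a b by (auto simp: card_insert_if)
  from assms show ?thesis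
  proof (cases rule: trap_vertex_cases)
    case spine_low then show ?thesis
      using card3 trap_neighbours_spine_low[of u] by (simp add: deg_def)
  next
    case spine_high then show ?thesis
      using card2 trap_neighbours_spine_high[of u] trap_neighbours_spine_top
      by (cases "u = M") (simp_all add: deg_def)
  next
    case root then show ?thesis
      using trap_neighbours_root by (simp add: deg_def)
  next
    case (layer1 x) then show ?thesis
      using card2 card3 trap_neighbours_layer1_first trap_neighbours_layer1[of x]
      by (cases "x = 1") (simp_all add: deg_def)
  next
    case (layer2 x) then show ?thesis
      using card2 trap_neighbours_layer2[of x] by (simp add: deg_def)
  next
    case (layer3 x)
    show ?thesis
    proof (cases "x = W")
      case True
      then have "u = M + 3*W" using layer3 by simp
      then show ?thesis using trap_neighbours_layer3_last by (simp add: deg_def)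
    next
      case False
      then show ?thesis using layer3 card2 trap_neighbours_layer3[of x] by (simp add: deg_def)
    qed
  next
    case (excited x) then show ?thesis
      using card2 trap_neighbours_excited[of x] by (simp add: deg_def)
  qed
qed

lemma trap_deg_1: "deg (M + 4*W) (trap_graph W M) 1 = 3"
  using W2 WM trap_neighbours_spine_low[of 1] by (simp add: deg_def)

lemma trap_geodesic_excited:
  assumes x: "1 \<le> x" "x < W" and geo: "is_geodesic (trap_graph W M) (M + 3*W + x) 0 p"
  shows "p ! 1 = M + x + 1"
proof -
  let ?E = "trap_graph W M" and ?lv = "trap_level W M"
  obtain q where q: "is_walk ?E q" "hd q = x + 1" "last q = 0" "length q = x + 2"
    using trap_spine_walk[of "x + 1"] x WM by auto
  have "is_walk ?E ((M + 3*W + x) # (M + x + 1) # q)"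
    using q x by (intro is_walk_Cons) (auto simp: trap_graph_def trap_arc_def)
  moreover have "q \<noteq> []" using q(4) by auto
  ultimately have "gdist ?E (M + 3*W + x) 0 \<le> x + 3"
    using gdist_le_walk_length q by fastforce
  have "M + 3*W + x \<noteq> 0" using WM by simp
  note next_vertex = geodesic_second_vertex[where phi = ?lv, OF geo this trap_level_lipschitz]
  have "p ! 1 < M + 4*W"
    using simple_graph_edge_bound[OF trap_simple next_vertex(1)] by simp
  then have "p ! 1 \<in> {y\<in>{..<M + 4*W}. ?E (M + 3*W + x) y}"
    using next_vertex(1) by simp
  then have "p ! 1 = M + 2*W + x \<or> p ! 1 = M + x + 1"
    unfolding trap_neighbours_excited[OF x] by simp
  moreover have "?lv (M + 2*W + x) = x + 3" "?lv 0 = 0"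
    using x by (simp_all add: trap_level_def)
  ultimately show ?thesis
    using next_vertex(2) \<open>gdist ?E (M + 3*W + x) 0 \<le> x + 3\<close> by fastforce
qed

lemma trap_potential_spine: "v \<le> M \<Longrightarrow> trap_potential W M v = 16 * (5/4)^(W - v)"
  by (simp add: trap_potential_def)

lemma trap_potential_layer1:
  "1 \<le> x \<Longrightarrow> x \<le> W \<Longrightarrow> trap_potential W M (M + x) = 15 * (5/4)^(W - x)"
  by (simp add: trap_potential_def)

lemma trap_potential_layer2:
  "1 \<le> x \<Longrightarrow> x \<le> W \<Longrightarrow> trap_potential W M (M + W + x) = 14 * (5/4)^(W - x)"
  by (simp add: trap_potential_def)

lemma trap_potential_layer3:
  "1 \<le> x \<Longrightarrow> x \<le> W \<Longrightarrow> trap_potential W M (M + 2*W + x) = 13 * (5/4)^(W - x)"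
  by (simp add: trap_potential_def)

lemma trap_potential_excited:
  "1 \<le> x \<Longrightarrow> trap_potential W M (M + 3*W + x) = 12 * (5/4)^(W - x)"
  by (simp add: trap_potential_def)

lemma trap_drift_spine:
  assumes "1 \<le> u" "u \<le> M"
  shows "gb_mean (M + 4*W) (trap_graph W M) (trap_excited W M) geo (trap_potential W M) u
    \<le> trap_potential W M u + 1"
proof -
  have "u \<notin> trap_excited W M" using assms by (simp add: trap_excited_def)
  note mean = gb_mean_neighbours[where E = "trap_graph W M" and geo = geo
      and f = "trap_potential W M", OF this]
  consider "u \<le> W" | "W < u" "u < M" | "u = M" using assms by linarith
  then show ?thesis
  proof cases
    case 1
    have "u - 1 \<noteq> u + 1" "u - 1 \<noteq> M + u" "u + 1 \<noteq> M + u" using W2 WM by auto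
    moreover note mean[OF trap_neighbours_spine_low[OF assms(1) 1]]
    moreover have "(16 * (5/4)^(W - (u - 1)) + 16 * (5/4)^(W - (u + 1)) + 15 * (5/4)^(W - u)) / 3
        \<le> 16 * (5/4::real)^(W - u) + 1"
    proof (cases "u = W")
      case False
      define k where "k = W - u - 1"
      have k: "W - (u - 1) = k + 2" "W - (u + 1) = k" "W - u = k + 1"
        using 1 False assms unfolding k_def by auto
      have "0 \<le> (5/4::real)^k" by simp
      then show ?thesis unfolding k by simp
    qed (use W2 in simp)
    ultimately show ?thesis
      using 1 assms WM by (simp add: trap_potential_spine trap_potential_layer1)
  next
    case 2
    then show ?thesis
      using mean[OF trap_neighbours_spine_high[OF 2]] by (simp add: trap_potential_spine)
  next
    case 3
    then show ?thesis
      using WM mean[of "M + 4*W", unfolded 3 trap_neighbours_spine_top]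
      by (simp add: trap_potential_spine)
  qed
qed

lemma trap_drift_excited:
  assumes x: "1 \<le> x" "x < W"
    and geo: "is_geodesic (trap_graph W M) (M + 3*W + x) 0 (geo (M + 3*W + x))"
  shows "gb_mean (M + 4*W) (trap_graph W M) (trap_excited W M) geo (trap_potential W M)
    (M + 3*W + x) = trap_potential W M (M + 3*W + x)"
proof -
  have "M + 3*W + x \<in> trap_excited W M" using x by (simp add: trap_excited_def)
  moreover have "geo (M + 3*W + x) ! 1 = M + (x + 1)"
    using trap_geodesic_excited[OF x geo] by simp
  moreover have "W - x = Suc (W - (x + 1))" using x by simp
  ultimately show ?thesis
    using x trap_potential_layer1[of "x + 1"] by (simp add: gb_mean_excited trap_potential_excited)
qed

lemma trap_drift_layer1:
  assumes x: "1 \<le> x" "x \<le> W"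
  shows "gb_mean (M + 4*W) (trap_graph W M) (trap_excited W M) geo (trap_potential W M) (M + x)
    = trap_potential W M (M + x)"
proof -
  have "M + x \<notin> trap_excited W M" using x by (simp add: trap_excited_def)
  note mean = gb_mean_neighbours[where E = "trap_graph W M" and geo = geo
      and f = "trap_potential W M", OF this, of "M + 4*W"]
  show ?thesis
  proof (cases "x = 1")
    case True
    then show ?thesis
      using W2 WM mean[unfolded True trap_neighbours_layer1_first]
        trap_potential_layer1[of 1] trap_potential_layer2[of 1]
      by (simp add: trap_potential_spine)
  next
    case False
    then have "2 \<le> x" using x by simp
    moreover have "W - (x - 1) = Suc (W - x)" using x by simp
    ultimately show ?thesis
      using x WM mean[unfolded trap_neighbours_layer1[OF \<open>2 \<le> x\<close> x(2)]]
        trap_potential_excited[of "x - 1"]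
      by (simp add: trap_potential_spine trap_potential_layer1 trap_potential_layer2)
  qed
qed

lemma trap_drift_layer2:
  assumes x: "1 \<le> x" "x \<le> W"
  shows "gb_mean (M + 4*W) (trap_graph W M) (trap_excited W M) geo (trap_potential W M) (M + W + x)
    = trap_potential W M (M + W + x)"
proof -
  have "M + W + x \<notin> trap_excited W M" using x by (simp add: trap_excited_def)
  from gb_mean_neighbours[where E = "trap_graph W M" and geo = geo and f = "trap_potential W M",
      OF this trap_neighbours_layer2[OF x]]
  show ?thesis
    using x by (simp add: trap_potential_layer1 trap_potential_layer2 trap_potential_layer3)
qed

lemma trap_drift_layer3:
  assumes x: "1 \<le> x" "x \<le> W"
  shows "gb_mean (M + 4*W) (trap_graph W M) (trap_excited W M) geo (trap_potential W M)
    (M + 2*W + x) \<le> trap_potential W M (M + 2*W + x) + 1"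
proof -
  have "M + 2*W + x \<notin> trap_excited W M" using x by (simp add: trap_excited_def)
  note mean = gb_mean_neighbours[where E = "trap_graph W M" and geo = geo
      and f = "trap_potential W M", OF this, of "M + 4*W"]
  show ?thesis
  proof (cases "x = W")
    case True
    then have u: "M + 2*W + x = M + 3*W" by simp
    have "trap_potential W M (M + 2*W) = 14" "trap_potential W M (M + 3*W) = 13"
      using W2 by (simp_all add: trap_potential_def)
    then show ?thesis using mean[unfolded u trap_neighbours_layer3_last] unfolding u by simp
  next
    case False
    then have "x < W" using x by simp
    then show ?thesis
      using x mean[unfolded trap_neighbours_layer3[OF x(1) \<open>x < W\<close>]]
      by (simp add: trap_potential_layer2 trap_potential_layer3 trap_potential_excited)
  qed
qed

lemma trap_drift:
  assumes "u < M + 4*W" "u \<noteq> 0" and geo: "is_geodesic (trap_graph W M) u 0 (geo u)"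
  shows "gb_mean (M + 4*W) (trap_graph W M) (trap_excited W M) geo (trap_potential W M) u
    \<le> trap_potential W M u + 1"
  using assms(1)
proof (cases rule: trap_vertex_cases)
  case (excited x) then show ?thesis using trap_drift_excited geo by simp
next
  case (layer1 x) then show ?thesis using trap_drift_layer1 by simp
next
  case (layer2 x) then show ?thesis using trap_drift_layer2 by simp
next
  case (layer3 x) then show ?thesis using trap_drift_layer3 by simp
qed (use assms(2) WM in \<open>auto intro!: trap_drift_spine\<close>)

lemma trap_expected_hitting:
  assumes geo: "\<forall>x<M + 4*W. x \<noteq> 0 \<longrightarrow> is_geodesic (trap_graph W M) x 0 (geo x)"
  shows "ennreal (8 * (5/4)^W - 16)
    \<le> gb_expected_hitting (M + 4*W) (trap_graph W M) (trap_excited W M) geo W 0"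
proof -
  have "ennreal (trap_potential W M 0 / 2 - trap_potential W M W)
      \<le> gb_expected_hitting (M + 4*W) (trap_graph W M) (trap_excited W M) geo W 0"
  proof (rule gb_expected_hitting_ge_drift)
    show "(\<Sum>y<M + 4*W. gb_trans (M + 4*W) (trap_graph W M) (trap_excited W M) geo x y) = 1"
      if "x < M + 4*W" "x \<noteq> 0" for x
      using that geo W2 by (intro gb_trans_row_sum[where b = 0] trap_simple trap_connected) auto
  qed (use W2 WM geo trap_drift in \<open>auto simp: trap_potential_def\<close>)
  then show ?thesis using WM by (simp add: trap_potential_spine)
qed

end

lemma exp_root4_square_le:
  assumes "6 \<le> W"
  shows "exp (root 4 (real (W * W)) / 100) \<le> 8 * (5/4::real)^W - 16"
proof -
  have "W * W \<le> W ^ 4" by (metis le_square mult.assoc power4_eq_xxxx)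
  then have "real (W * W) \<le> real W ^ 4" by (metis of_nat_le_iff of_nat_power)
  then have "root 4 (real (W * W)) \<le> root 4 (real W ^ 4)"
    by (subst real_root_le_iff) auto
  then have "exp (root 4 (real (W * W)) / 100) \<le> exp (real W * (1/100))"
    by (simp add: real_root_pos2)
  also have "\<dots> = exp (1/100) ^ W" by (rule exp_of_nat_mult)
  also have "\<dots> \<le> (5/4) ^ W"
  proof (rule power_mono)
    have "exp (1/100::real) \<le> 1 + 2 * (1/100)" by (rule real_exp_bound_lemma) auto
    then show "exp (1/100::real) \<le> 5/4" by simp
  qed simp
  also have "\<dots> \<le> 8 * (5/4::real)^W - 16"
    using power_increasing[OF assms, of "5/4::real"] by (simp add: power_divide)
  finally show ?thesis .
qed

lemma trap_witness:
  assumes "6 \<le> W"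
  defines "n \<equiv> W * W" and "M \<equiv> W * W - 4 * W"
  shows "simple_graph n (trap_graph W M) \<and> connected_graph n (trap_graph W M)
    \<and> (\<forall>x<n. deg n (trap_graph W M) x \<le> 3) \<and> (\<exists>x<n. deg n (trap_graph W M) x = 3)
    \<and> W < n \<and> 0 < n \<and> trap_excited W M \<subseteq> {..<n} \<and> real (card (trap_excited W M)) \<le> sqrt (real n)
    \<and> (\<forall>geo. (\<forall>x<n. x \<noteq> 0 \<longrightarrow> is_geodesic (trap_graph W M) x 0 (geo x)) \<longrightarrow>
         ennreal (exp (root 4 (real n) / 100))
         \<le> gb_expected_hitting n (trap_graph W M) (trap_excited W M) geo W 0)"
proof -
  have "6 * W \<le> W * W" using assms(1) by simp
  then have W2: "2 \<le> W" and WM: "W < M" and n: "M + 4*W = n"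
    using assms(1) unfolding n_def M_def by linarith+
  have "real (card (trap_excited W M)) \<le> sqrt (real n)"
    unfolding n_def by (simp add: trap_excited_def)
  moreover have "ennreal (exp (root 4 (real n) / 100)) \<le> ennreal (8 * (5/4)^W - 16)"
    using exp_root4_square_le[OF assms(1)] unfolding n_def by (rule ennreal_leI)
  then have "ennreal (exp (root 4 (real n) / 100))
      \<le> gb_expected_hitting n (trap_graph W M) (trap_excited W M) geo W 0"
    if "\<forall>x<n. x \<noteq> 0 \<longrightarrow> is_geodesic (trap_graph W M) x 0 (geo x)" for geo
    using trap_expected_hitting[OF W2 WM, unfolded n, OF that] by (rule order_trans)
  moreover have "trap_excited W M \<subseteq> {..<n}" unfolding trap_excited_def n[symmetric] by auto
  moreover have "1 < n" "W < n" using W2 WM n by linarith+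
  ultimately show ?thesis
    using trap_simple[OF W2 WM] trap_connected[OF W2 WM] trap_deg_le_3[OF W2 WM]
      trap_deg_1[OF W2 WM]
    unfolding n by auto
qed

theorem theorem1p2:
  shows "\<exists>c C :: real. c > 0 \<and> C > 0 \<and>
    (\<forall>N. \<exists>n\<ge>N. \<exists>E a b X.
       simple_graph n E \<and> connected_graph n E \<and>
       (\<forall>x<n. deg n E x \<le> 3) \<and> (\<exists>x<n. deg n E x = 3) \<and>
       a < n \<and> b < n \<and> X \<subseteq> {..<n} \<and> real (card X) \<le> C * sqrt (real n) \<and>
       (\<forall>geo. (\<forall>x<n. x \<noteq> b \<longrightarrow> is_geodesic E x b (geo x)) \<longrightarrow>
          ennreal (c * exp (root 4 (real n) / 100)) \<le> gb_expected_hitting n E X geo a b))"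
proof (rule exI[of _ 1], rule exI[of _ 1], intro conjI allI)
  fix N :: nat
  define W where "W = max N 6"
  have "6 \<le> W" unfolding W_def by simp
  note witness = trap_witness[OF this]
  have "N \<le> W * W" unfolding W_def by (metis le_square max.cobounded1 order_trans)
  then show "\<exists>n\<ge>N. \<exists>E a b X.
       simple_graph n E \<and> connected_graph n E \<and>
       (\<forall>x<n. deg n E x \<le> 3) \<and> (\<exists>x<n. deg n E x = 3) \<and>
       a < n \<and> b < n \<and> X \<subseteq> {..<n} \<and> real (card X) \<le> 1 * sqrt (real n) \<and>
       (\<forall>geo. (\<forall>x<n. x \<noteq> b \<longrightarrow> is_geodesic E x b (geo x)) \<longrightarrow>
          ennreal (1 * exp (root 4 (real n) / 100)) \<le> gb_expected_hitting n E X geo a b)"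
    using witness
    by (intro exI[of _ "W * W"] conjI[OF \<open>N \<le> W * W\<close>] exI[of _ "trap_graph W (W * W - 4 * W)"]
        exI[of _ W] exI[of _ 0] exI[of _ "trap_excited W (W * W - 4 * W)"]) simp
qed simp_all

end
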